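(* Let $\pi$ be a probability measure on $\mathbb{R}^2$ whose first marginal $\pi_1$ has no atoms, and let $\psi:\mathbb{R}\to\mathbb{R}$ be a Borel function. Define $R_{op}=\{(x,y):x>\psi(y)\}$ and $R_{cl}=\{(x,y):x\ge\psi(y)\}$. Let $B$ be a standard Brownian motion started at $0$, and define $\tau_{op}(x,y)=\inf\{t\ge0:(x,y+B_t)\in R_{op}\}$ and $\tau_{cl}(x,y)=\inf\{t\ge0:(x,y+B_t)\in R_{cl}\}$. If $(X,Y)$ has distribution $\pi$ and is independent of $B$, then $\tau_{cl}(X,Y)=\tau_{op}(X,Y)$ almost surely. *)

theory Defs
  imports "HOL-Probability.Probability"
begin

text \<open>Standard (one-dimensional) Brownian motion started at 0 on a probability space M,
  indexed by times t \<ge> 0 (values at negative times are irrelevant).\<close>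
definition std_brownian_motion :: "'a measure \<Rightarrow> (real \<Rightarrow> 'a \<Rightarrow> real) \<Rightarrow> bool" where
  "std_brownian_motion M B \<longleftrightarrow>
     prob_space M \<and>
     (\<forall>t\<ge>0. B t \<in> borel_measurable M) \<and>
     (\<forall>\<omega>\<in>space M. B 0 \<omega> = 0) \<and>
     (\<forall>\<omega>\<in>space M. continuous_on {0..} (\<lambda>t. B t \<omega>)) \<and>
     (\<forall>s t. 0 \<le> s \<and> s < t \<longrightarrow>
        distributed M lborel (\<lambda>\<omega>. B t \<omega> - B s \<omega>)
          (\<lambda>x. ennreal (normal_density 0 (sqrt (t - s)) x))) \<and>
     (\<forall>(ts :: nat \<Rightarrow> real) n. 0 \<le> ts 0 \<and> (\<forall>i<n. ts i < ts (Suc i)) \<longrightarrow>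
        prob_space.indep_vars M (\<lambda>_. borel)
          (\<lambda>i \<omega>. B (ts (Suc i)) \<omega> - B (ts i) \<omega>) {..<n})"

text \<open>Independence of two random variables with possibly different value types
  (the library's indep_var requires equal types; this is its unfolding, cf. indep_var_eq).\<close>
definition indep_rvs :: "'a measure \<Rightarrow> 'b measure \<Rightarrow> ('a \<Rightarrow> 'b) \<Rightarrow> 'c measure \<Rightarrow> ('a \<Rightarrow> 'c) \<Rightarrow> bool" where
  "indep_rvs M S X T Y \<longleftrightarrow>
     X \<in> measurable M S \<and> Y \<in> measurable M T \<and>
     prob_space.indep_set M
       {X -` A \<inter> space M | A. A \<in> sets S}
       {Y -` A \<inter> space M | A. A \<in> sets T}"

text \<open>First hitting time of a set R by the process t \<mapsto> (x, y + B_t), with inf \<emptyset> = \<infinity>.\<close>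
definition hitting_time ::
    "(real \<times> real) set \<Rightarrow> (real \<Rightarrow> 'a \<Rightarrow> real) \<Rightarrow> real \<Rightarrow> real \<Rightarrow> 'a \<Rightarrow> ereal" where
  "hitting_time R B x y \<omega> = Inf (ereal ` {t. t \<ge> 0 \<and> (x, y + B t \<omega>) \<in> R})"

end

theory Submission
  imports Defs
begin

text \<open>Write \<open>z t = Y + B t\<close>. The closed hitting time can only come first if the path
  reaches \<open>{\<psi> \<le> X}\<close> at some time \<open>t\<close> and then stays in \<open>{\<psi> \<ge> X}\<close> for a while. On a dyadic
  interval \<open>[0, q]\<close> around \<open>t\<close> the value \<open>z t\<close> is then the maximum or the minimum of the
  path: otherwise \<open>\<psi>\<close> would attain its infimum \<open>X\<close> on a rational interval, and these
  countably many values are avoided by \<open>X\<close>, whose law has no atoms. Such an extreme value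
  is moreover either \<open>Y\<close> or one of countably many levels determined by \<open>\<psi>\<close> and \<open>X\<close>.

  For a fixed level \<open>c\<close>, the supremum of Brownian motion over the dyadic times in
  \<open>[0, q]\<close> is almost surely different from \<open>c\<close>: either it is already the supremum after
  some dyadic time \<open>a > 0\<close>, where \<open>B a\<close> has a density and is independent of the later
  increments, or \<open>B\<close> is non-positive at all times \<open>q / 2^k\<close>, which has probability \<open>0\<close> by
  the 0-1 law. Since \<open>(X, Y)\<close> is independent of \<open>B\<close>, the level may depend on \<open>(X, Y)\<close>.\<close>

section \<open>Independence\<close>

lemma indep_rvs_joint_distr:
  assumes P: "prob_space M" and I: "indep_rvs M S X T Y"
  shows "distr M S X \<Otimes>\<^sub>M distr M T Y = distr M (S \<Otimes>\<^sub>M T) (\<lambda>x. (X x, Y x))"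
proof -
  interpret prob_space M by fact
  have rvs: "X \<in> measurable M S" "Y \<in> measurable M T" and ind:
    "indep_set {X -` A \<inter> space M | A. A \<in> sets S} {Y -` A \<inter> space M | A. A \<in> sets T}"
    using I unfolding indep_rvs_def by auto
  then have XY: "(\<lambda>x. (X x, Y x)) \<in> measurable M (S \<Otimes>\<^sub>M T)"
    by (intro measurable_Pair)
  let ?S = "distr M S X" and ?T = "distr M T Y" and ?J = "distr M (S \<Otimes>\<^sub>M T) (\<lambda>x. (X x, Y x))"
  interpret X: prob_space ?S by (rule prob_space_distr) fact
  interpret Y: prob_space ?T by (rule prob_space_distr) fact
  show "?S \<Otimes>\<^sub>M ?T = ?J"
  proof (rule pair_measure_eqI)
    show "sigma_finite_measure ?S" "sigma_finite_measure ?T" ..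
    fix A B assume A: "A \<in> sets ?S" and B: "B \<in> sets ?T"
    have ev: "X -` A \<inter> space M \<in> events" "Y -` B \<inter> space M \<in> events"
      using rvs A B by auto
    have "prob ((X -` A \<inter> space M) \<inter> (Y -` B \<inter> space M))
        = prob (X -` A \<inter> space M) * prob (Y -` B \<inter> space M)"
    proof -
      have "X -` A \<inter> space M \<in> {X -` A \<inter> space M | A. A \<in> sets S}"
        "Y -` B \<inter> space M \<in> {Y -` A \<inter> space M | A. A \<in> sets T}" using A B by auto
      then show ?thesis using ind[unfolded indep_sets2_eq] by blast
    qed
    then have "emeasure M ((X -` A \<inter> space M) \<inter> (Y -` B \<inter> space M))
        = emeasure M (X -` A \<inter> space M) * emeasure M (Y -` B \<inter> space M)"
      using ev by (simp add: emeasure_eq_measure ennreal_mult)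
    moreover have "(\<lambda>x. (X x, Y x)) -` (A \<times> B) \<inter> space M = (X -` A \<inter> space M) \<inter> (Y -` B \<inter> space M)"
      by auto
    ultimately show "emeasure ?S A * emeasure ?T B = emeasure ?J (A \<times> B)"
      using rvs XY A B by (simp add: emeasure_distr)
  qed simp
qed

lemma indep_rvs_null_if_sections_null:
  assumes P: "prob_space M" and I: "indep_rvs M S X T Y"
    and E: "E \<in> sets (S \<Otimes>\<^sub>M T)"
    and null: "\<And>x. x \<in> space S \<Longrightarrow> emeasure (distr M T Y) (Pair x -` E) = 0"
  shows "emeasure M {\<omega>\<in>space M. (X \<omega>, Y \<omega>) \<in> E} = 0"
proof -
  interpret prob_space M by fact
  have rvs: "X \<in> measurable M S" "Y \<in> measurable M T"
    using I unfolding indep_rvs_def by auto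
  then have XY: "(\<lambda>x. (X x, Y x)) \<in> measurable M (S \<Otimes>\<^sub>M T)"
    by (intro measurable_Pair)
  interpret Y: prob_space "distr M T Y" by (rule prob_space_distr) fact
  have "emeasure M {\<omega>\<in>space M. (X \<omega>, Y \<omega>) \<in> E} = emeasure (distr M (S \<Otimes>\<^sub>M T) (\<lambda>x. (X x, Y x))) E"
    using E XY by (subst emeasure_distr) (auto intro!: arg_cong[where f="emeasure M"])
  also have "\<dots> = emeasure (distr M S X \<Otimes>\<^sub>M distr M T Y) E"
    using indep_rvs_joint_distr[OF P I] by simp
  also have "\<dots> = (\<integral>\<^sup>+ x. emeasure (distr M T Y) (Pair x -` E) \<partial>distr M S X)"
    using E by (intro Y.emeasure_pair_measure_alt) auto
  also have "\<dots> = 0"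
    using null by (intro nn_integral_zero') (auto intro!: AE_I2)
  finally show ?thesis .
qed

lemma indep_rvs_compose_right:
  assumes P: "prob_space M" and I: "indep_rvs M S X T Y" and f: "f \<in> measurable T T'"
  shows "indep_rvs M S X T' (\<lambda>\<omega>. f (Y \<omega>))"
proof -
  interpret prob_space M by fact
  have rvs: "X \<in> measurable M S" "Y \<in> measurable M T" and ind:
    "indep_set {X -` A \<inter> space M | A. A \<in> sets S} {Y -` A \<inter> space M | A. A \<in> sets T}"
    using I unfolding indep_rvs_def by auto
  have "{(\<lambda>\<omega>. f (Y \<omega>)) -` A \<inter> space M | A. A \<in> sets T'} \<subseteq> {Y -` A \<inter> space M | A. A \<in> sets T}"
  proof safe
    fix A assume A: "A \<in> sets T'"
    have "(\<lambda>\<omega>. f (Y \<omega>)) -` A \<inter> space M = Y -` (f -` A \<inter> space T) \<inter> space M"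
      using rvs(2) by (auto simp: measurable_def)
    moreover have "f -` A \<inter> space T \<in> sets T" using f A by (rule measurable_sets)
    ultimately show "\<exists>A'. (\<lambda>\<omega>. f (Y \<omega>)) -` A \<inter> space M = Y -` A' \<inter> space M \<and> A' \<in> sets T"
      by blast
  qed
  then have "indep_set {X -` A \<inter> space M | A. A \<in> sets S} {(\<lambda>\<omega>. f (Y \<omega>)) -` A \<inter> space M | A. A \<in> sets T'}"
    unfolding indep_set_def
    by (intro indep_sets_mono_sets[OF ind[unfolded indep_set_def]]) (auto split: bool.split)
  moreover have "(\<lambda>\<omega>. f (Y \<omega>)) \<in> measurable M T'" using rvs f by measurable
  ultimately show ?thesis using rvs unfolding indep_rvs_def by auto
qed

lemma Int_stable_vimage:
  assumes "Int_stable A"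
  shows "Int_stable {f -` a \<inter> \<Omega> | a. a \<in> A}"
proof (rule Int_stableI)
  fix x y assume "x \<in> {f -` a \<inter> \<Omega> | a. a \<in> A}" "y \<in> {f -` a \<inter> \<Omega> | a. a \<in> A}"
  then obtain a b where "x = f -` a \<inter> \<Omega>" "y = f -` b \<inter> \<Omega>" "a \<in> A" "b \<in> A" by auto
  moreover have "a \<inter> b \<in> A" using assms calculation(3,4) unfolding Int_stable_def by blast
  ultimately show "x \<inter> y \<in> {f -` a \<inter> \<Omega> | a. a \<in> A}" by (intro CollectI exI[of _ "a \<inter> b"]) auto
qed

text \<open>Cylinders form an \<open>\<inter>\<close>-stable generator of the product \<open>\<sigma>\<close>-algebra, so
  independence only has to be checked on them.\<close>
lemma indep_rvs_PiM_if_cylinders: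
  assumes P: "prob_space M" and U: "U \<in> measurable M (Pi\<^sub>M D N)" and V: "V \<in> measurable M T"
    and cyl: "\<And>J E A. finite J \<Longrightarrow> J \<subseteq> D \<Longrightarrow> (\<And>j. j \<in> J \<Longrightarrow> E j \<in> sets (N j)) \<Longrightarrow>
      A \<in> sets T \<Longrightarrow>
      measure M {\<omega>\<in>space M. (\<forall>j\<in>J. U \<omega> j \<in> E j) \<and> V \<omega> \<in> A}
      = measure M {\<omega>\<in>space M. \<forall>j\<in>J. U \<omega> j \<in> E j} * measure M {\<omega>\<in>space M. V \<omega> \<in> A}"
  shows "indep_rvs M (Pi\<^sub>M D N) U T V"
proof -
  interpret prob_space M by fact
  define G where "G = {U -` A \<inter> space M | A. A \<in> prod_algebra D N}"
  define C where "C = {V -` A \<inter> space M | A. A \<in> sets T}"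
  have "indep_set G C"
    unfolding indep_sets2_eq
  proof (intro conjI ballI)
    show "G \<subseteq> events"
      unfolding G_def using U by (auto intro!: measurable_sets simp: sets_PiM intro: sigma_sets.Basic)
    show "C \<subseteq> events" unfolding C_def using V by auto
    fix g c assume g: "g \<in> G" and c: "c \<in> C"
    obtain P where gP: "g = U -` P \<inter> space M" and P: "P \<in> prod_algebra D N"
      using g unfolding G_def by auto
    obtain A where cA: "c = V -` A \<inter> space M" and A: "A \<in> sets T"
      using c unfolding C_def by auto
    obtain J E where PJ: "P = prod_emb D N J (\<Pi>\<^sub>E j\<in>J. E j)" and J: "finite J" "J \<subseteq> D"
      and E: "\<And>j. j \<in> J \<Longrightarrow> E j \<in> sets (N j)"
      using prod_algebraE[OF P] by metis
    have "g = {\<omega>\<in>space M. \<forall>j\<in>J. U \<omega> j \<in> E j}"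
      using U J(2) unfolding gP PJ by (auto simp: prod_emb_iff measurable_def space_PiM PiE_iff)
    moreover have "c = {\<omega>\<in>space M. V \<omega> \<in> A}" unfolding cA by auto
    ultimately show "prob (g \<inter> c) = prob g * prob c"
      using cyl[OF J E A] by (simp add: Collect_conj_eq Int_assoc Int_left_commute)
  qed
  moreover have "Int_stable G"
    unfolding G_def by (rule Int_stable_vimage[OF Int_stable_prod_algebra])
  moreover have "Int_stable C"
    unfolding C_def by (rule Int_stable_vimage) (auto simp: Int_stable_def)
  ultimately have ind: "indep_set (sigma_sets (space M) G) (sigma_sets (space M) C)"
    by (rule indep_set_sigma_sets)
  have "{U -` A \<inter> space M | A. A \<in> sets (Pi\<^sub>M D N)} = sigma_sets (space M) G"
    unfolding sets_PiM G_def
    by (rule sigma_sets_vimage_commute) (use U in \<open>auto simp: measurable_def space_PiM\<close>)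
  then have "indep_set {U -` A \<inter> space M | A. A \<in> sets (Pi\<^sub>M D N)} C"
    unfolding indep_set_def
    by (intro indep_sets_mono_sets[OF ind[unfolded indep_set_def]])
      (auto split: bool.split intro: sigma_sets.Basic)
  then show ?thesis unfolding indep_rvs_def C_def using U V by auto
qed

lemma (in prob_space) indep_vars_reindex:
  assumes ind: "indep_vars (\<lambda>_. N) X I" and f: "bij_betw f J I"
  shows "indep_vars (\<lambda>_. N) (\<lambda>j. X (f j)) J"
proof -
  have inj: "inj_on f J" and fJ: "f ` J = I" using f by (auto simp: bij_betw_def)
  have rv: "\<forall>i\<in>I. random_variable N (X i)"
    and isd: "indep_sets (\<lambda>i. {X i -` A \<inter> space M |A. A \<in> sets N}) I"
    using ind unfolding indep_vars_def2 by auto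
  show ?thesis unfolding indep_vars_def2
  proof (intro conjI ballI)
    fix j assume "j \<in> J" then show "random_variable N (X (f j))" using rv fJ by auto
  next
    show "indep_sets (\<lambda>j. {X (f j) -` A \<inter> space M |A. A \<in> sets N}) J"
      unfolding indep_sets_def
    proof (intro conjI ballI allI impI)
      fix j assume "j \<in> J" then show "{X (f j) -` A \<inter> space M |A. A \<in> sets N} \<subseteq> events"
        using isd fJ unfolding indep_sets_def by auto
    next
      fix K A assume K: "K \<subseteq> J" "K \<noteq> {}" "finite K"
        and A: "A \<in> (\<Pi> j\<in>K. {X (f j) -` A \<inter> space M |A. A \<in> sets N})"
      define A' where "A' i = A (the_inv_into J f i)" for i
      have inv: "the_inv_into J f (f k) = k" if "k \<in> K" for k
        using the_inv_into_f_f[OF inj] K that by auto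
      have "prob (\<Inter>i\<in>f ` K. A' i) = (\<Prod>i\<in>f ` K. prob (A' i))"
      proof (rule indep_setsD[OF isd])
        show "f ` K \<subseteq> I" "f ` K \<noteq> {}" "finite (f ` K)" using K fJ by auto
        show "\<forall>i\<in>f ` K. A' i \<in> {X i -` A \<inter> space M |A. A \<in> sets N}"
          using A inv unfolding A'_def by (auto dest: Pi_mem)
      qed
      moreover have "inj_on f K" using inj K(1) by (rule inj_on_subset)
      ultimately show "prob (\<Inter>k\<in>K. A k) = (\<Prod>k\<in>K. prob (A k))"
        by (simp add: prod.reindex A'_def inv cong: INF_cong prod.cong)
    qed
  qed
qed

lemma (in prob_space) indep_vars_UNIV_if_lessThan:
  fixes X :: "nat \<Rightarrow> 'a \<Rightarrow> 'b"
  assumes "\<And>n. indep_vars N X {..<n}"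
  shows "indep_vars N X UNIV"
  unfolding indep_vars_def2
proof (intro conjI ballI)
  fix i show "random_variable (N i) (X i)"
    using assms[of "Suc i"] unfolding indep_vars_def2 by auto
next
  show "indep_sets (\<lambda>i. {X i -` A \<inter> space M |A. A \<in> sets (N i)}) UNIV"
    unfolding indep_sets_finite_index_sets[of _ UNIV]
  proof (intro allI impI)
    fix J :: "nat set" assume "J \<subseteq> UNIV" "J \<noteq> {}" "finite J"
    then have "J \<subseteq> {..<Suc (Max J)}" by (auto simp: le_imp_less_Suc)
    then show "indep_sets (\<lambda>i. {X i -` A \<inter> space M |A. A \<in> sets (N i)}) J"
      using assms[of "Suc (Max J)"] unfolding indep_vars_def2 by (auto intro: indep_sets_mono_index)
  qed
qed

lemma (in prob_space) tail_sums_eventually_nonpos_tail_event: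
  fixes \<xi> S :: "nat \<Rightarrow> 'a \<Rightarrow> real"
  assumes S: "\<And>k \<omega>. \<omega> \<in> space M \<Longrightarrow> (\<lambda>N. \<Sum>j\<in>{k..<k + N}. \<xi> j \<omega>) \<longlonglongrightarrow> S k \<omega>"
  shows "{\<omega>\<in>space M. \<exists>K. \<forall>k\<ge>K. S k \<omega> \<le> 0}
    \<in> tail_events (\<lambda>i. sigma_sets (space M) {\<xi> i -` A \<inter> space M | A. A \<in> sets borel})"
  unfolding tail_events_def
proof (rule InterI, safe)
  fix n :: nat
  define G where "G = (\<Union>i\<in>{n..}. sigma_sets (space M) {\<xi> i -` A \<inter> space M | A. A \<in> sets borel})"
  have "G \<subseteq> Pow (space M)"
    unfolding G_def by (auto dest: sigma_sets_into_sp[rotated])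
  then have sp: "space (sigma (space M) G) = space M" and sets: "sets (sigma (space M) G) = sigma_sets (space M) G"
    by (auto simp: space_measure_of sets_measure_of)
  have \<xi>: "\<xi> j \<in> borel_measurable (sigma (space M) G)" if "n \<le> j" for j
  proof (rule measurableI)
    fix A :: "real set" assume "A \<in> sets borel"
    then have "\<xi> j -` A \<inter> space M \<in> G" unfolding G_def using that by (auto intro: sigma_sets.Basic)
    then show "\<xi> j -` A \<inter> space (sigma (space M) G) \<in> sets (sigma (space M) G)"
      unfolding sp sets by (rule sigma_sets.Basic)
  qed auto
  have [measurable]: "S k \<in> borel_measurable (sigma (space M) G)" if "n \<le> k" for k
  proof (rule borel_measurable_LIMSEQ_real[where u="\<lambda>N \<omega>. \<Sum>j\<in>{k..<k + N}. \<xi> j \<omega>"])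
    show "(\<lambda>N. \<Sum>j\<in>{k..<k + N}. \<xi> j \<omega>) \<longlonglongrightarrow> S k \<omega>" if "\<omega> \<in> space (sigma (space M) G)" for \<omega>
      using S that unfolding sp by auto
    show "(\<lambda>\<omega>. \<Sum>j\<in>{k..<k + N}. \<xi> j \<omega>) \<in> borel_measurable (sigma (space M) G)" for N
      using \<xi> that by (intro borel_measurable_sum) auto
  qed
  have "{\<omega>\<in>space M. \<exists>K. \<forall>k\<ge>K. S k \<omega> \<le> 0}
      = {\<omega>\<in>space (sigma (space M) G). \<exists>K::nat. \<forall>k::nat. n \<le> k \<longrightarrow> K \<le> k \<longrightarrow> S k \<omega> \<le> 0}"
    unfolding sp
  proof (intro Collect_cong conj_cong refl iffI)
    fix \<omega> assume "\<exists>K. \<forall>k. n \<le> k \<longrightarrow> K \<le> k \<longrightarrow> S k \<omega> \<le> 0"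
    then obtain K where "\<forall>k. n \<le> k \<longrightarrow> K \<le> k \<longrightarrow> S k \<omega> \<le> 0" by blast
    then show "\<exists>K. \<forall>k\<ge>K. S k \<omega> \<le> 0" by (intro exI[of _ "max n K"]) auto
  qed auto
  also have "\<dots> \<in> sets (sigma (space M) G)"
  proof (intro sets.sets_Collect_countable_Ex sets.sets_Collect_countable_All)
    fix K k :: nat
    show "{\<omega>\<in>space (sigma (space M) G). n \<le> k \<longrightarrow> K \<le> k \<longrightarrow> S k \<omega> \<le> 0} \<in> sets (sigma (space M) G)"
      by (cases "n \<le> k") auto
  qed
  finally show "{\<omega>\<in>space M. \<exists>K. \<forall>k\<ge>K. S k \<omega> \<le> 0} \<in> sigma_sets (space M) G"
    unfolding sets .
qed

lemma AE_notin_countable_if_no_atoms: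
  fixes X :: "'a \<Rightarrow> real"
  assumes "prob_space M" and X: "X \<in> borel_measurable M"
    and atoms: "\<And>x. measure (distr M borel X) {x} = 0" and C: "countable C"
  shows "AE \<omega> in M. X \<omega> \<notin> C"
proof -
  interpret prob_space M by fact
  interpret X: prob_space "distr M borel X" using X by (rule prob_space_distr)
  have "AE \<omega> in M. X \<omega> \<noteq> c" for c
  proof (rule AE_I)
    show "{\<omega>\<in>space M. X \<omega> = c} \<in> events"
      using X by measurable
    have "emeasure M {\<omega>\<in>space M. X \<omega> = c} = emeasure (distr M borel X) {c}"
      using X by (subst emeasure_distr) (auto intro!: arg_cong[where f="emeasure M"])
    then show "emeasure M {\<omega>\<in>space M. X \<omega> = c} = 0"
      using atoms[of c] by (simp add: X.emeasure_eq_measure)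
  qed auto
  then have "AE \<omega> in M. \<forall>c\<in>C. X \<omega> \<noteq> c" by (intro AE_ball_countable'[OF _ C])
  then show ?thesis by (rule eventually_mono) auto
qed

section \<open>Dyadic rationals and suprema over them\<close>

definition dyadics :: "real set" where
  "dyadics = {t. \<exists>j n::nat. t = real j / 2^n}"

lemma countable_dyadics: "countable dyadics"
proof -
  have "dyadics = (\<lambda>(j, n). real j / 2^n) ` (UNIV :: (nat \<times> nat) set)"
    unfolding dyadics_def by auto
  then show ?thesis by (metis countableI_type countable_image)
qed

lemma dyadics_divide_power: "q \<in> dyadics \<Longrightarrow> q / 2^k \<in> dyadics"
  unfolding dyadics_def by (auto simp: power_add) (metis divide_divide_eq_left power_add)

lemma dyadic_approx_below:
  assumes "0 \<le> t" "0 < d"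
  shows "\<exists>u\<in>dyadics. 0 \<le> u \<and> u \<le> t \<and> t - u < d"
proof -
  obtain k :: nat where k: "(1/2::real)^k < d" using real_arch_pow_inv[of d "1/2"] assms by auto
  define j where "j = nat \<lfloor>t * 2^k\<rfloor>"
  have "real j = of_int \<lfloor>t * 2^k\<rfloor>" unfolding j_def using assms by simp
  then have j: "real j \<le> t * 2^k" "t * 2^k < real j + 1" by linarith+
  have "real j / 2^k \<le> t" using j by (simp add: divide_le_eq)
  moreover have "t - real j / 2^k = (t * 2^k - real j) / 2^k" by (simp add: field_simps)
  moreover have "(t * 2^k - real j) / 2^k < 1 / 2^k" using j by (intro divide_strict_right_mono) auto
  moreover have "(1::real) / 2^k = (1/2)^k" by (simp add: power_divide)
  ultimately show ?thesis using k
    by (intro bexI[of _ "real j / 2^k"]) (auto simp: dyadics_def)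
qed

lemma dyadic_between:
  assumes "0 \<le> t" "t < s"
  shows "\<exists>q\<in>dyadics. t < q \<and> q < s"
proof -
  obtain k :: nat where k: "(1/2::real)^k < s - t"
    using real_arch_pow_inv[of "s - t" "1/2"] assms by auto
  define j where "j = nat \<lfloor>t * 2^k\<rfloor> + 1"
  have "real j = of_int \<lfloor>t * 2^k\<rfloor> + 1" unfolding j_def using assms by simp
  then have j: "t * 2^k < real j" "real j \<le> t * 2^k + 1" by linarith+
  have "t < real j / 2^k" using j by (simp add: less_divide_eq)
  moreover have "real j / 2^k \<le> t + (1/2)^k"
    using j by (simp add: power_divide field_simps)
  ultimately show ?thesis using k
    by (intro bexI[of _ "real j / 2^k"]) (auto simp: dyadics_def)
qed

lemma dyadics_common_denominator:
  assumes "finite F" "F \<subseteq> dyadics"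
  shows "\<exists>N. \<forall>x\<in>F. \<exists>i::nat. x = real i / 2^N"
  using assms
proof (induction F rule: finite_induct)
  case (insert x F)
  then obtain N where N: "\<forall>x\<in>F. \<exists>i::nat. x = real i / 2^N" by auto
  from insert obtain j n where x: "x = real j / 2^n" unfolding dyadics_def by auto
  have rescale: "real i / 2^m = real (i * 2^(max n N - m)) / (2::real)^max n N"
    if "m \<le> max n N" for i m
  proof -
    have "(2::real)^max n N = 2^m * 2^(max n N - m)" using that by (metis le_add_diff_inverse power_add)
    then show ?thesis by simp
  qed
  have "\<exists>i::nat. y = real i / 2^max n N" if "y \<in> insert x F" for y
    using that x N rescale by (metis insert_iff max.cobounded1 max.cobounded2)
  then show ?case by blast
qed simp

lemma dyadics_grid_above:
  assumes a: "a \<in> dyadics" and J: "finite J" "J \<subseteq> dyadics \<inter> {a..}"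
  shows "\<exists>N l. \<forall>j\<in>J. j = a + real (l j) / 2^N"
proof -
  obtain N where N: "\<forall>x\<in>insert a J. \<exists>i::nat. x = real i / 2^N"
    using dyadics_common_denominator[of "insert a J"] a J by auto
  then obtain ia where ia: "a = real ia / 2^N" by auto
  have "\<exists>l::nat. j = a + real l / 2^N" if j: "j \<in> J" for j
  proof -
    obtain i where i: "j = real i / 2^N" using N j by auto
    have "ia \<le> i" using i ia J(2) j by (auto simp: divide_le_cancel)
    then show ?thesis using i ia by (intro exI[of _ "i - ia"]) (simp add: of_nat_diff diff_divide_distrib)
  qed
  then show ?thesis by metis
qed

text \<open>\<open>is_sup_on D f c\<close> says that \<open>c\<close> is the supremum of \<open>f\<close> over \<open>D\<close>; the
  approximation from below is phrased with countably many conditions so that it is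
  measurable in \<open>f\<close>.\<close>
definition is_sup_on :: "'a set \<Rightarrow> ('a \<Rightarrow> real) \<Rightarrow> real \<Rightarrow> bool" where
  "is_sup_on D f c \<longleftrightarrow> (\<forall>t\<in>D. f t \<le> c) \<and> (\<forall>n::nat. \<exists>t\<in>D. c - 1 / (real n + 1) < f t)"

lemma is_sup_on_cong: "(\<And>t. t \<in> D \<Longrightarrow> f t = g t) \<Longrightarrow> is_sup_on D f c \<longleftrightarrow> is_sup_on D g c"
  unfolding is_sup_on_def by auto

lemma is_sup_on_add_const: "is_sup_on D (\<lambda>t. a + f t) c \<longleftrightarrow> is_sup_on D f (c - a)"
  unfolding is_sup_on_def by (auto simp: algebra_simps)

lemma is_sup_on_add_const_unique:
  assumes "is_sup_on D (\<lambda>t. a + f t) c" "is_sup_on D (\<lambda>t. b + f t) c"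
  shows "a = b"
proof -
  have "a \<le> b" if ha: "is_sup_on D (\<lambda>t. a + f t) c" and hb: "is_sup_on D (\<lambda>t. b + f t) c" for a b
  proof (rule ccontr)
    assume "\<not> a \<le> b"
    then obtain n :: nat where n: "1 / (real n + 1) < a - b"
      using reals_Archimedean[of "a - b"] by (auto simp: inverse_eq_divide add.commute)
    obtain t where "t \<in> D" "c - 1 / (real n + 1) < b + f t"
      using hb unfolding is_sup_on_def by auto
    moreover have "a + f t \<le> c" if "t \<in> D" for t using ha that
      unfolding is_sup_on_def by auto
    ultimately show False using n by fastforce
  qed
  with assms show ?thesis by (meson order_antisym)
qed

lemma pred_is_sup_on:
  fixes F :: "'i \<Rightarrow> 'a \<Rightarrow> real"
  assumes "countable D" and "\<And>t. t \<in> D \<Longrightarrow> F t \<in> borel_measurable N"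
    and "C \<in> borel_measurable N"
  shows "Measurable.pred N (\<lambda>x. is_sup_on D (\<lambda>t. F t x) (C x))"
  unfolding is_sup_on_def
proof (intro pred_intros_logic measurable_pred_countable[OF assms(1)] pred_intros_countable)
  fix t assume "t \<in> D"
  note [measurable] = assms(2)[OF this] assms(3)
  show "Measurable.pred N (\<lambda>x. F t x \<le> C x)" by measurable
  fix n :: nat show "Measurable.pred N (\<lambda>x. C x - 1 / (real n + 1) < F t x)" by measurable
qed

lemma is_sup_on_dyadics_at_max:
  assumes z: "continuous_on {0..} z" and t: "t \<in> {0..q}"
    and max: "\<And>u. u \<in> {0..q} \<Longrightarrow> z u \<le> z t"
  shows "is_sup_on (dyadics \<inter> {0..q}) z (z t)"
  unfolding is_sup_on_def
proof (intro conjI ballI allI)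
  fix u assume "u \<in> dyadics \<inter> {0..q}" then show "z u \<le> z t" using max by auto
next
  fix n :: nat
  obtain d where d: "d > 0" "\<And>u. u \<in> {0..} \<Longrightarrow> dist u t < d \<Longrightarrow> dist (z u) (z t) < 1 / (real n + 1)"
    using z t unfolding continuous_on_iff by (metis atLeastAtMost_iff atLeast_iff divide_pos_pos
      of_nat_0_le_iff add_nonneg_pos zero_less_one)
  obtain u where u: "u \<in> dyadics" "0 \<le> u" "u \<le> t" "t - u < d"
    using dyadic_approx_below[OF _ d(1), of t] t by auto
  then have "z t - 1 / (real n + 1) < z u" using d(2)[of u] by (auto simp: dist_real_def)
  moreover have "u \<in> dyadics \<inter> {0..q}" using u t by auto
  ultimately show "\<exists>u\<in>dyadics \<inter> {0..q}. z t - 1 / (real n + 1) < z u" by blast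
qed

lemma is_sup_on_Un_UNION:
  fixes K :: nat
  assumes sup: "is_sup_on (D \<union> (\<Union>k<K. E k)) f c" and e: "0 < e"
    and low: "\<And>t. t \<in> D \<Longrightarrow> f t \<le> c - e"
  shows "\<exists>k<K. is_sup_on (E k) f c"
proof (rule ccontr)
  assume none: "\<not> ?thesis"
  have "\<exists>n::nat. \<forall>t\<in>E k. f t \<le> c - 1 / (real n + 1)" if "k < K" for k
  proof -
    have "\<forall>t\<in>E k. f t \<le> c" using sup that unfolding is_sup_on_def by auto
    with none that show ?thesis unfolding is_sup_on_def by (meson not_less)
  qed
  then obtain n where n: "\<And>k t. k < K \<Longrightarrow> t \<in> E k \<Longrightarrow> f t \<le> c - 1 / (real (n k) + 1)"
    by metis
  define m where "m = (\<Sum>k<K. n k) + nat \<lceil>1 / e\<rceil>"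
  have "1 / e < real m + 1" unfolding m_def by linarith
  then have me: "1 / (real m + 1) < e" using e by (simp add: field_simps)
  obtain t where t: "t \<in> D \<union> (\<Union>k<K. E k)" "c - 1 / (real m + 1) < f t"
    using sup unfolding is_sup_on_def by blast
  show False
  proof (cases "t \<in> D")
    case True then show False using low[of t] t(2) me by linarith
  next
    case False
    then obtain k where k: "k < K" "t \<in> E k" using t(1) by blast
    have "n k \<le> m" unfolding m_def using k(1) by (intro trans_le_add1 member_le_sum) auto
    then have "c - 1 / (real (n k) + 1) \<le> c - 1 / (real m + 1)" by (simp add: frac_le)
    then show False using n[OF k] t(2) by linarith
  qed
qed

lemma exists_halving_interval:
  fixes q t :: real
  assumes "0 < q" "q / 2^K < t" "t \<le> q"
  shows "\<exists>k<K. q / 2^Suc k \<le> t \<and> t \<le> q / 2^k"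
  using assms(2,3)
proof (induction K)
  case (Suc K)
  show ?case
  proof (cases "q / 2^K < t")
    case True
    then show ?thesis using Suc by (metis less_Suc_eq)
  next
    case False
    then show ?thesis using Suc.prems by (intro exI[of _ K]) auto
  qed
qed simp

text \<open>Near time \<open>0\<close> a continuous path started at \<open>0\<close> stays below a positive level \<open>c\<close>,
  so a positive supremum over \<open>[0, q]\<close> is already the supremum over one of finitely many
  dyadic blocks \<open>[q/2^(k+1), q/2^k]\<close>.\<close>
lemma is_sup_on_dyadics_split:
  fixes z :: "real \<Rightarrow> real"
  assumes z: "continuous_on {0..} z" "z 0 = 0" and q: "q \<in> dyadics" "0 < q"
    and sup: "is_sup_on (dyadics \<inter> {0..q}) z c"
  shows "(\<forall>k. z (q / 2^k) \<le> 0) \<or> (\<exists>k. is_sup_on (dyadics \<inter> {q / 2^Suc k..q / 2^k}) z c)"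
proof (cases "c \<le> 0")
  case True
  have "q / 2^k \<in> dyadics \<inter> {0..q}" for k :: nat
    using dyadics_divide_power[OF q(1)] q(2) by (auto simp: divide_le_eq)
  then show ?thesis using sup True unfolding is_sup_on_def by (meson order_trans)
next
  case False
  then obtain d where d: "d > 0" "\<And>t. t \<in> {0..} \<Longrightarrow> dist t 0 < d \<Longrightarrow> dist (z t) (z 0) < c / 2"
    using z(1) unfolding continuous_on_iff by (metis atLeast_iff half_gt_zero not_le order_refl)
  obtain K :: nat where K: "(1/2::real)^K < d / q" using real_arch_pow_inv[of "d / q" "1/2"] d q by auto
  then have qK: "q / 2^K < d" using q by (simp add: power_divide field_simps)
  have "dyadics \<inter> {0..q} = (dyadics \<inter> {0..q / 2^K}) \<union> (\<Union>k<K. dyadics \<inter> {q / 2^Suc k..q / 2^k})"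
  proof (intro equalityI subsetI)
    fix t assume "t \<in> dyadics \<inter> {0..q}"
    then show "t \<in> (dyadics \<inter> {0..q / 2^K}) \<union> (\<Union>k<K. dyadics \<inter> {q / 2^Suc k..q / 2^k})"
      using exists_halving_interval[OF q(2), of K t] by (cases "t \<le> q / 2^K") auto
  next
    have "q / 2^k \<le> q" for k :: nat using q(2) by (simp add: divide_le_eq)
    moreover have "0 \<le> q / 2^Suc k" for k using q(2) by simp
    ultimately show "t \<in> dyadics \<inter> {0..q}"
      if "t \<in> (dyadics \<inter> {0..q / 2^K}) \<union> (\<Union>k<K. dyadics \<inter> {q / 2^Suc k..q / 2^k})" for t
      using that q(2) by (auto intro: order_trans)
  qed
  with sup have "is_sup_on ((dyadics \<inter> {0..q / 2^K}) \<union> (\<Union>k<K. dyadics \<inter> {q / 2^Suc k..q / 2^k})) z c"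
    by simp
  moreover have "z t \<le> c - c / 2" if "t \<in> dyadics \<inter> {0..q / 2^K}" for t
    using that d(2)[of t] qK z(2) by (auto simp: dist_real_def)
  ultimately have "\<exists>k<K. is_sup_on (dyadics \<inter> {q / 2^Suc k..q / 2^k}) z c"
    using False by (intro is_sup_on_Un_UNION[where e="c / 2"]) auto
  then show ?thesis by blast
qed

section \<open>Touching a level set without entering it\<close>

definition interval_infima :: "(real \<Rightarrow> real) \<Rightarrow> real set" where
  "interval_infima \<psi> = (\<lambda>(a, b). Inf (\<psi> ` {a<..<b})) ` (\<rat> \<times> \<rat>)"

definition next_below :: "(real \<Rightarrow> real) \<Rightarrow> real \<Rightarrow> real \<Rightarrow> ereal" where
  "next_below \<psi> r x = Inf (ereal ` {w. r \<le> w \<and> \<psi> w < x})"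

lemma countable_interval_infima: "countable (interval_infima \<psi>)"
  unfolding interval_infima_def by (intro countable_image countable_SIGMA countable_rat)

lemma interval_infima_reflect: "interval_infima (\<lambda>w. \<psi> (- w)) = interval_infima \<psi>"
proof -
  have flip: "(\<lambda>(a, b). (- b, - a)) ` (\<rat> \<times> \<rat>) = \<rat> \<times> \<rat>"
    by (auto simp: image_iff) (metis Rats_minus_iff minus_minus)+
  have "(\<lambda>w. \<psi> (- w)) ` {a<..<b} = \<psi> ` {- b<..<- a}" for a b
    by (metis image_image image_uminus_greaterThanLessThan)
  then have "interval_infima (\<lambda>w. \<psi> (- w)) = (\<lambda>(a, b). Inf (\<psi> ` {a<..<b})) ` (\<lambda>(a, b). (- b, - a)) ` (\<rat> \<times> \<rat>)"
    unfolding interval_infima_def image_image by (simp add: case_prod_beta)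
  then show ?thesis unfolding flip interval_infima_def .
qed

lemma below_level_nearby:
  assumes "x \<notin> interval_infima \<psi>" "a < v" "v < b" "\<psi> v = x"
  shows "\<exists>w. a < w \<and> w < b \<and> \<psi> w < x"
proof (rule ccontr)
  assume "\<not> ?thesis"
  then have above: "\<And>w. a < w \<Longrightarrow> w < b \<Longrightarrow> x \<le> \<psi> w" by force
  obtain a' where a': "a' \<in> \<rat>" "a < a'" "a' < v" using Rats_dense_in_real assms by blast
  obtain b' where b': "b' \<in> \<rat>" "v < b'" "b' < b" using Rats_dense_in_real assms by blast
  have "Inf (\<psi> ` {a'<..<b'}) = x"
    by (rule cInf_eq_minimum) (use a' b' above assms in auto)
  then have "x \<in> interval_infima \<psi>" unfolding interval_infima_def using a' b'
    by (intro image_eqI[of _ _ "(a', b')"]) auto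
  with assms show False by simp
qed

lemma next_below_eq:
  assumes "x \<notin> interval_infima \<psi>" and v: "\<psi> v = x" "r < v"
    and above: "\<And>w. r \<le> w \<Longrightarrow> w < v \<Longrightarrow> x \<le> \<psi> w"
  shows "next_below \<psi> r x = ereal v"
  unfolding next_below_def
proof (rule antisym)
  show "ereal v \<le> Inf (ereal ` {w. r \<le> w \<and> \<psi> w < x})"
    using above by (force intro!: Inf_greatest)
  show "Inf (ereal ` {w. r \<le> w \<and> \<psi> w < x}) \<le> ereal v"
  proof (rule ereal_le_epsilon2)
    fix e :: real assume "e > 0"
    then obtain w where "r < w" "w < v + e" "\<psi> w < x"
      using below_level_nearby[OF assms(1) v(2) _ v(1), of "v + e"] by auto
    then have "Inf (ereal ` {w. r \<le> w \<and> \<psi> w < x}) \<le> ereal w" by (intro Inf_lower) auto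
    also have "\<dots> \<le> ereal v + ereal e" using \<open>w < v + e\<close> by simp
    finally show "Inf (ereal ` {w. r \<le> w \<and> \<psi> w < x}) \<le> ereal v + ereal e" .
  qed
qed

lemma borel_measurable_next_below: "next_below \<psi> r \<in> borel_measurable borel"
proof (subst borel_measurable_ereal_iff_Iio, intro allI)
  fix a
  have antimono: "next_below \<psi> r x' \<le> next_below \<psi> r x" if "x \<le> x'" for x x'
    unfolding next_below_def by (intro Inf_superset_mono image_mono) (use that in auto)
  have "is_interval (next_below \<psi> r -` {..<a})"
    unfolding is_interval_1 by (auto dest: antimono intro: le_less_trans)
  then show "next_below \<psi> r -` {..<a} \<inter> space borel \<in> sets borel"
    by (simp add: real_interval_borel_measurable)
qed

lemma touching_point_extremal:
  fixes z :: "real \<Rightarrow> real"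
  assumes z: "continuous_on {0..q} z" and x: "x \<notin> interval_infima \<psi>"
    and t: "t \<in> {0..q}" "\<psi> (z t) \<le> x" and above: "\<And>u. u \<in> {0..q} \<Longrightarrow> x \<le> \<psi> (z u)"
  shows "(\<forall>u\<in>{0..q}. z u \<le> z t) \<or> (\<forall>u\<in>{0..q}. z t \<le> z u)"
proof -
  obtain c d where cd: "z ` {0..q} = {c..d}"
    using continuous_image_closed_interval[of 0 q z] z t by auto
  have level: "\<psi> (z t) = x" using t above by force
  have "\<not> (c < z t \<and> z t < d)"
  proof
    assume "c < z t \<and> z t < d"
    then obtain w where "c < w" "w < d" "\<psi> w < x" using below_level_nearby[OF x _ _ level] by blast
    moreover from this obtain u where "u \<in> {0..q}" "z u = w"
      using cd by (metis atLeastAtMost_iff imageE less_imp_le)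
    ultimately show False using above by force
  qed
  moreover have "z t \<in> {c..d}" using cd t by blast
  ultimately show ?thesis using cd by (force simp: not_less)
qed

lemma running_max_level:
  fixes z :: "real \<Rightarrow> real"
  assumes z: "continuous_on {0..q} z" and x: "x \<notin> interval_infima \<psi>"
    and t: "t \<in> {0..q}" "\<psi> (z t) = x" and above: "\<And>u. u \<in> {0..q} \<Longrightarrow> x \<le> \<psi> (z u)"
    and max: "\<And>u. u \<in> {0..q} \<Longrightarrow> z u \<le> z t"
  shows "z t = z 0 \<or> (\<exists>r\<in>\<rat>. next_below \<psi> r x = ereal (z t))"
proof (cases "z 0 < z t")
  case True
  then obtain r where r: "r \<in> \<rat>" "z 0 < r" "r < z t" using Rats_dense_in_real by blast
  obtain c d where cd: "z ` {0..q} = {c..d}"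
    using continuous_image_closed_interval[of 0 q z] z t by auto
  have "z 0 \<in> {c..d}" "z t \<in> {c..d}" using cd t by auto
  then have "x \<le> \<psi> w" if "r \<le> w" "w < z t" for w
    using that r above cd by (smt (verit, best) atLeastAtMost_iff imageE)
  then have "next_below \<psi> r x = ereal (z t)" by (rule next_below_eq[OF x t(2) r(3)])
  with r show ?thesis by blast
qed (use max[of 0] t in force)

text \<open>The levels at which the running maximum of a path started at \<open>y\<close> can reach
  \<open>{\<psi> \<le> x}\<close> without entering \<open>{\<psi> < x}\<close>: \<open>y\<close> itself, or the first point to the right of a
  rational \<open>r\<close> where \<open>\<psi>\<close> drops below \<open>x\<close> (if there is none, only the harmless level \<open>0\<close>
  is added).\<close>
definition critical_levels :: "(real \<Rightarrow> real) \<Rightarrow> real \<Rightarrow> real \<Rightarrow> real set" where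
  "critical_levels \<psi> x y = insert y ((\<lambda>r. real_of_ereal (next_below \<psi> r x)) ` \<rat>)"

definition no_dyadic_sup_at :: "real set \<Rightarrow> (real \<Rightarrow> real) \<Rightarrow> bool" where
  "no_dyadic_sup_at L z \<longleftrightarrow>
     (\<forall>q\<in>dyadics. 0 < q \<longrightarrow> (\<forall>c\<in>L. \<not> is_sup_on (dyadics \<inter> {0..q}) z c))"

lemma running_max_not_touching:
  fixes z :: "real \<Rightarrow> real"
  assumes z: "continuous_on {0..} z" and x: "x \<notin> interval_infima \<psi>"
    and nosup: "no_dyadic_sup_at (critical_levels \<psi> x (z 0)) z"
    and q: "q \<in> dyadics" "0 < q"
    and t: "t \<in> {0..q}" "\<psi> (z t) = x" and above: "\<And>u. u \<in> {0..q} \<Longrightarrow> x \<le> \<psi> (z u)"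
    and max: "\<And>u. u \<in> {0..q} \<Longrightarrow> z u \<le> z t"
  shows False
proof -
  have zq: "continuous_on {0..q} z" using z by (rule continuous_on_subset) auto
  have "is_sup_on (dyadics \<inter> {0..q}) z (z t)"
    using is_sup_on_dyadics_at_max[OF z t(1) max] .
  moreover have "z t \<in> critical_levels \<psi> x (z 0)"
    using running_max_level[OF zq x t above max] by (force simp: critical_levels_def)
  ultimately show False using nosup q unfolding no_dyadic_sup_at_def by blast
qed

lemma hitting_closed_eq_open_if_no_critical_sup:
  fixes z \<psi> :: "real \<Rightarrow> real"
  assumes z: "continuous_on {0..} z" and x: "x \<notin> interval_infima \<psi>"
    and up: "no_dyadic_sup_at (critical_levels \<psi> x (z 0)) z"
    and down: "no_dyadic_sup_at (critical_levels (\<lambda>w. \<psi> (- w)) x (- z 0)) (\<lambda>t. - z t)"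
  shows "Inf (ereal ` {t. 0 \<le> t \<and> \<psi> (z t) \<le> x}) = Inf (ereal ` {t. 0 \<le> t \<and> \<psi> (z t) < x})"
    (is "Inf (ereal ` ?closed) = Inf (ereal ` ?open)")
proof (rule antisym)
  show "Inf (ereal ` ?closed) \<le> Inf (ereal ` ?open)"
    by (intro Inf_superset_mono image_mono) auto
  show "Inf (ereal ` ?open) \<le> Inf (ereal ` ?closed)"
  proof (rule ccontr)
    assume "\<not> ?thesis"
    then have "Inf (ereal ` ?closed) < Inf (ereal ` ?open)" by (simp add: not_le)
    then obtain s where s: "Inf (ereal ` ?closed) < ereal s" "ereal s < Inf (ereal ` ?open)"
      using ereal_dense2 by blast
    obtain t where t: "0 \<le> t" "\<psi> (z t) \<le> x" "t < s"
      using s(1) unfolding Inf_less_iff by auto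
    obtain q where q: "q \<in> dyadics" "t < q" "q < s" using dyadic_between[OF t(1) t(3)] by blast
    have above: "x \<le> \<psi> (z u)" if "u \<in> {0..q}" for u
    proof (rule ccontr)
      assume "\<not> x \<le> \<psi> (z u)"
      then have "Inf (ereal ` ?open) \<le> ereal u" using that by (intro Inf_lower) auto
      moreover have "ereal u < ereal s" using that q by simp
      ultimately show False using s(2) by (meson leD less_trans)
    qed
    have tq: "t \<in> {0..q}" "\<psi> (z t) = x" using t q above[of t] by auto
    have "continuous_on {0..q} z" using z by (rule continuous_on_subset) auto
    from touching_point_extremal[OF this x tq(1) t(2) above]
    show False
    proof
      assume "\<forall>u\<in>{0..q}. z u \<le> z t"
      with q t show False by (intro running_max_not_touching[OF z x up q(1) _ tq above]) auto
    next
      assume "\<forall>u\<in>{0..q}. z t \<le> z u"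
      moreover have "continuous_on {0..} (\<lambda>t. - z t)" using z by (rule continuous_on_minus)
      moreover have "x \<notin> interval_infima (\<lambda>w. \<psi> (- w))" using x by (simp add: interval_infima_reflect)
      ultimately show False
        using running_max_not_touching[of "\<lambda>t. - z t" x "\<lambda>w. \<psi> (- w)" q t] down q t tq above
        by simp
    qed
  qed
qed

section \<open>Brownian motion\<close>

lemma brownian_prob_space: "std_brownian_motion M B \<Longrightarrow> prob_space M"
  unfolding std_brownian_motion_def by simp

lemma brownian_measurable: "std_brownian_motion M B \<Longrightarrow> 0 \<le> t \<Longrightarrow> B t \<in> borel_measurable M"
  unfolding std_brownian_motion_def by simp

lemma brownian_at_zero: "std_brownian_motion M B \<Longrightarrow> \<omega> \<in> space M \<Longrightarrow> B 0 \<omega> = 0"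
  unfolding std_brownian_motion_def by simp

lemma brownian_continuous:
  "std_brownian_motion M B \<Longrightarrow> \<omega> \<in> space M \<Longrightarrow> continuous_on {0..} (\<lambda>t. B t \<omega>)"
  unfolding std_brownian_motion_def by simp

lemma brownian_increment_distributed:
  "std_brownian_motion M B \<Longrightarrow> 0 \<le> s \<Longrightarrow> s < t \<Longrightarrow>
   distributed M lborel (\<lambda>\<omega>. B t \<omega> - B s \<omega>) (\<lambda>x. ennreal (normal_density 0 (sqrt (t - s)) x))"
  unfolding std_brownian_motion_def by simp

lemma brownian_increments_indep:
  "std_brownian_motion M B \<Longrightarrow> 0 \<le> ts 0 \<Longrightarrow> (\<And>i. i < n \<Longrightarrow> ts i < ts (Suc i)) \<Longrightarrow>
   prob_space.indep_vars M (\<lambda>_. borel) (\<lambda>i \<omega>. B (ts (Suc i)) \<omega> - B (ts i) \<omega>) {..<n}"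
  unfolding std_brownian_motion_def by simp

lemma std_brownian_motion_uminus:
  assumes bm: "std_brownian_motion M B"
  shows "std_brownian_motion M (\<lambda>t \<omega>. - B t \<omega>)"
proof -
  interpret prob_space M using brownian_prob_space[OF bm] .
  show ?thesis
    unfolding std_brownian_motion_def
  proof (intro conjI allI impI ballI)
    show "prob_space M" by unfold_locales
    fix t :: real assume "0 \<le> t" then show "(\<lambda>\<omega>. - B t \<omega>) \<in> borel_measurable M"
      using brownian_measurable[OF bm] by measurable
  next
    fix \<omega> assume "\<omega> \<in> space M"
    then show "- B 0 \<omega> = 0" "continuous_on {0..} (\<lambda>t. - B t \<omega>)"
      using brownian_at_zero[OF bm] brownian_continuous[OF bm] by (auto intro: continuous_on_minus)
  next
    fix s t :: real assume st: "0 \<le> s \<and> s < t"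
    have "distributed M lborel (\<lambda>x. 0 + (-1) * (B t x - B s x))
        (normal_density (0 + (-1) * 0) (\<bar>-1\<bar> * sqrt (t - s)))"
      by (rule normal_density_affine) (use brownian_increment_distributed[OF bm] st in auto)
    then show "distributed M lborel (\<lambda>\<omega>. - B t \<omega> - - B s \<omega>)
        (\<lambda>x. ennreal (normal_density 0 (sqrt (t - s)) x))"
      by simp
  next
    fix ts :: "nat \<Rightarrow> real" and n assume "0 \<le> ts 0 \<and> (\<forall>i<n. ts i < ts (Suc i))"
    then have "indep_vars (\<lambda>_. borel) (\<lambda>i \<omega>. uminus (B (ts (Suc i)) \<omega> - B (ts i) \<omega>)) {..<n}"
      by (intro indep_vars_compose2[OF brownian_increments_indep[OF bm]]) auto
    then show "indep_vars (\<lambda>_. borel) (\<lambda>i \<omega>. - B (ts (Suc i)) \<omega> - - B (ts i) \<omega>) {..<n}"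
      by simp
  qed
qed

lemma indep_rvs_uminus_path:
  fixes B :: "real \<Rightarrow> 'a \<Rightarrow> real"
  assumes "prob_space M"
    and "indep_rvs M S Z (Pi\<^sub>M {0::real..} (\<lambda>_. borel)) (\<lambda>\<omega>. \<lambda>t\<in>{0..}. B t \<omega>)"
  shows "indep_rvs M S Z (Pi\<^sub>M {0::real..} (\<lambda>_. borel)) (\<lambda>\<omega>. \<lambda>t\<in>{0..}. - B t \<omega>)"
proof -
  have "(\<lambda>f::real \<Rightarrow> real. \<lambda>t\<in>{0::real..}. - f t)
      \<in> measurable (Pi\<^sub>M {0::real..} (\<lambda>_. borel)) (Pi\<^sub>M {0::real..} (\<lambda>_. borel))"
    by (intro measurable_restrict borel_measurable_uminus measurable_component_singleton) auto
  from indep_rvs_compose_right[OF assms this] show ?thesis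
    by (simp add: restrict_def cong: if_cong)
qed

lemma brownian_point_null:
  assumes bm: "std_brownian_motion M B" and a: "0 < a"
  shows "emeasure M {\<omega>\<in>space M. B a \<omega> = c} = 0"
proof -
  have d: "distributed M lborel (\<lambda>\<omega>. B a \<omega> - B 0 \<omega>) (\<lambda>x. ennreal (normal_density 0 (sqrt (a - 0)) x))"
    using brownian_increment_distributed[OF bm _ a] by simp
  have "{\<omega>\<in>space M. B a \<omega> = c} = (\<lambda>\<omega>. B a \<omega> - B 0 \<omega>) -` {c} \<inter> space M"
    using brownian_at_zero[OF bm] by auto
  also have "emeasure M \<dots> = (\<integral>\<^sup>+x. ennreal (normal_density 0 (sqrt (a - 0)) x) * indicator {c} x \<partial>lborel)"
    by (rule distributed_emeasure[OF d]) simp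
  also have "\<dots> = 0"
    using AE_lborel_singleton[of c] by (intro nn_integral_zero') (auto elim!: eventually_mono)
  finally show ?thesis .
qed

lemma brownian_prob_nonpos:
  assumes bm: "std_brownian_motion M B" and t: "0 < t"
  shows "measure M {\<omega>\<in>space M. B t \<omega> \<le> 0} \<le> 1/2"
proof -
  interpret prob_space M using brownian_prob_space[OF bm] .
  define W where "W = (\<lambda>\<omega>. B t \<omega> - B 0 \<omega>)"
  have d: "distributed M lborel W (\<lambda>x. ennreal (normal_density 0 (sqrt t) x))"
    unfolding W_def using brownian_increment_distributed[OF bm _ t] by simp
  have "distributed M lborel (\<lambda>x. 0 + (-1) * W x) (normal_density (0 + (-1) * 0) (\<bar>-1\<bar> * sqrt t))"
    by (rule normal_density_affine[OF d]) (use t in auto)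
  then have d': "distributed M lborel (\<lambda>x. - W x) (\<lambda>x. ennreal (normal_density 0 (sqrt t) x))"
    by simp
  have Wm: "W \<in> measurable M lborel" "(\<lambda>x. - W x) \<in> measurable M lborel"
    using d by (auto simp: distributed_def)
  have "prob {\<omega>\<in>space M. W \<omega> \<le> 0} = measure (distr M lborel W) {..0}"
    by (subst measure_distr[OF Wm(1)]) (auto intro!: arg_cong[where f="measure M"])
  also have "\<dots> = measure (distr M lborel (\<lambda>x. - W x)) {..0}"
    using distributed_distr_eq_density[OF d] distributed_distr_eq_density[OF d'] by simp
  also have "\<dots> = prob {\<omega>\<in>space M. 0 \<le> W \<omega>}"
    by (subst measure_distr[OF Wm(2)]) (auto intro!: arg_cong[where f="measure M"])
  finally have symm: "prob {\<omega>\<in>space M. W \<omega> \<le> 0} = prob {\<omega>\<in>space M. 0 \<le> W \<omega>}" .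
  have ev: "{\<omega>\<in>space M. W \<omega> \<le> 0} \<in> events" "{\<omega>\<in>space M. 0 < W \<omega>} \<in> events"
    "{\<omega>\<in>space M. W \<omega> = 0} \<in> events" using Wm by measurable
  have "{\<omega>\<in>space M. W \<omega> = 0} = {\<omega>\<in>space M. B t \<omega> = 0}"
    using brownian_at_zero[OF bm] unfolding W_def by auto
  then have null: "prob {\<omega>\<in>space M. W \<omega> = 0} = 0"
    using brownian_point_null[OF bm t, of 0] by (simp add: measure_def)
  have "prob {\<omega>\<in>space M. 0 \<le> W \<omega>} \<le> prob ({\<omega>\<in>space M. 0 < W \<omega>} \<union> {\<omega>\<in>space M. W \<omega> = 0})"
    by (rule finite_measure_mono) (use ev in auto)
  also have "\<dots> \<le> prob {\<omega>\<in>space M. 0 < W \<omega>}"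
    using measure_Un_le[OF ev(2,3)] null by simp
  also have "\<dots> = prob (space M - {\<omega>\<in>space M. W \<omega> \<le> 0})"
    by (intro arg_cong[where f=prob]) auto
  also have "\<dots> = 1 - prob {\<omega>\<in>space M. W \<omega> \<le> 0}" by (rule prob_compl[OF ev(1)])
  finally have "prob {\<omega>\<in>space M. W \<omega> \<le> 0} \<le> 1/2" using symm by linarith
  moreover have "{\<omega>\<in>space M. W \<omega> \<le> 0} = {\<omega>\<in>space M. B t \<omega> \<le> 0}"
    using brownian_at_zero[OF bm] unfolding W_def by auto
  ultimately show ?thesis by simp
qed

text \<open>On a common dyadic grid of mesh \<open>2^-N\<close> starting at \<open>a\<close>, every \<open>B j - B a\<close> is a sum
  of grid increments, which are independent of the first increment \<open>B a - B 0\<close>.\<close>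
lemma brownian_increments_after_indep_value:
  assumes bm: "std_brownian_motion M B" and a: "a \<in> dyadics" "0 < a"
    and J: "finite J" "J \<subseteq> dyadics \<inter> {a..}"
    and E: "\<And>j. j \<in> J \<Longrightarrow> E j \<in> sets borel" and A: "A \<in> sets borel"
  shows "measure M {\<omega>\<in>space M. (\<forall>j\<in>J. B j \<omega> - B a \<omega> \<in> E j) \<and> B a \<omega> \<in> A}
    = measure M {\<omega>\<in>space M. \<forall>j\<in>J. B j \<omega> - B a \<omega> \<in> E j} * measure M {\<omega>\<in>space M. B a \<omega> \<in> A}"
proof -
  interpret prob_space M using brownian_prob_space[OF bm] .
  obtain N l where l: "\<And>j. j \<in> J \<Longrightarrow> j = a + real (l j) / 2^N"
    using dyadics_grid_above[OF a(1) J] by blast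
  define L where "L = (\<Sum>j\<in>J. l j)"
  have lL: "l j \<le> L" if "j \<in> J" for j
    unfolding L_def using J(1) that by (intro member_le_sum) auto
  define ts where "ts i = (if i = 0 then 0 else a + real (i - 1) / 2^N)" for i
  define \<xi> where "\<xi> i \<omega> = B (ts (Suc i)) \<omega> - B (ts i) \<omega>" for i \<omega>
  have "indep_vars (\<lambda>_. borel) \<xi> {..<Suc L}"
    unfolding \<xi>_def using a(2)
    by (intro brownian_increments_indep[OF bm]) (auto simp: ts_def divide_strict_right_mono)
  then have ind: "indep_var (Pi\<^sub>M {0} (\<lambda>_. borel)) (\<lambda>\<omega>. restrict (\<lambda>i. \<xi> i \<omega>) {0})
      (Pi\<^sub>M {1..L} (\<lambda>_. borel)) (\<lambda>\<omega>. restrict (\<lambda>i. \<xi> i \<omega>) {1..L})"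
    by (rule indep_var_restrict) auto
  have telescope: "(\<Sum>i<l j. restrict (\<lambda>i. \<xi> i \<omega>) {1..L} (Suc i)) = B j \<omega> - B a \<omega>"
    if "j \<in> J" for j \<omega>
  proof -
    have "(\<Sum>i<l j. restrict (\<lambda>i. \<xi> i \<omega>) {1..L} (Suc i))
        = (\<Sum>i<l j. B (a + real (Suc i) / 2^N) \<omega> - B (a + real i / 2^N) \<omega>)"
      using lL[OF that] by (intro sum.cong) (auto simp: \<xi>_def ts_def)
    also have "\<dots> = B (a + real (l j) / 2^N) \<omega> - B (a + real 0 / 2^N) \<omega>"
      by (rule sum_lessThan_telescope)
    finally show ?thesis using l[OF that] by simp
  qed
  define XA where "XA = {f \<in> space (Pi\<^sub>M {0::nat} (\<lambda>_. borel)). f 0 \<in> A}"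
  define XE where "XE = {f \<in> space (Pi\<^sub>M {1..L} (\<lambda>_. borel)). \<forall>j\<in>J. (\<Sum>i<l j. f (Suc i)) \<in> E j}"
  have "XA \<in> sets (Pi\<^sub>M {0::nat} (\<lambda>_. borel))"
  proof -
    have "(\<lambda>f. f 0) \<in> measurable (Pi\<^sub>M {0::nat} (\<lambda>_. borel)) borel"
      using measurable_component_singleton[of 0 "{0::nat}" "\<lambda>_. borel"] by simp
    from measurable_sets[OF this A] show ?thesis
      unfolding XA_def by (simp add: vimage_def Int_def conj_commute)
  qed
  moreover have "XE \<in> sets (Pi\<^sub>M {1..L} (\<lambda>_. borel))"
    unfolding XE_def
  proof (rule sets.sets_Collect_finite_All[OF _ J(1)])
    fix j assume j: "j \<in> J"
    have "(\<lambda>f::nat \<Rightarrow> real. \<Sum>i<l j. f (Suc i)) \<in> borel_measurable (Pi\<^sub>M {1..L} (\<lambda>_. borel))"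
    proof (rule borel_measurable_sum[where f="\<lambda>i f. f (Suc i)"])
      fix i assume "i \<in> {..<l j}"
      then have "Suc i \<in> {1..L}" using lL[OF j] by auto
      then show "(\<lambda>f. f (Suc i)) \<in> borel_measurable (Pi\<^sub>M {1..L} (\<lambda>_. borel))"
        using measurable_component_singleton[of "Suc i" "{1..L}" "\<lambda>_. borel"] by simp
    qed
    from measurable_sets[OF this E[OF j]]
    show "{f \<in> space (Pi\<^sub>M {1..L} (\<lambda>_. borel)). (\<Sum>i<l j. f (Suc i)) \<in> E j}
      \<in> sets (Pi\<^sub>M {1..L} (\<lambda>_. borel))"
      by (simp add: vimage_def Int_def conj_commute)
  qed
  ultimately have "prob ((\<lambda>\<omega>. (restrict (\<lambda>i. \<xi> i \<omega>) {0}, restrict (\<lambda>i. \<xi> i \<omega>) {1..L})) -` (XA \<times> XE) \<inter> space M)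
    = prob ((\<lambda>\<omega>. restrict (\<lambda>i. \<xi> i \<omega>) {0}) -` XA \<inter> space M)
      * prob ((\<lambda>\<omega>. restrict (\<lambda>i. \<xi> i \<omega>) {1..L}) -` XE \<inter> space M)"
    by (rule indep_varD[OF ind])
  moreover have "(\<lambda>\<omega>. restrict (\<lambda>i. \<xi> i \<omega>) {0}) -` XA \<inter> space M = {\<omega>\<in>space M. B a \<omega> \<in> A}"
    using brownian_at_zero[OF bm] unfolding XA_def \<xi>_def ts_def by (auto simp: space_PiM PiE_iff)
  moreover have "(\<lambda>\<omega>. restrict (\<lambda>i. \<xi> i \<omega>) {1..L}) -` XE \<inter> space M
      = {\<omega>\<in>space M. \<forall>j\<in>J. B j \<omega> - B a \<omega> \<in> E j}"
    using telescope unfolding XE_def by (auto simp: space_PiM PiE_iff)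
  moreover have "(\<lambda>\<omega>. (restrict (\<lambda>i. \<xi> i \<omega>) {0}, restrict (\<lambda>i. \<xi> i \<omega>) {1..L})) -` (XA \<times> XE) \<inter> space M
      = ((\<lambda>\<omega>. restrict (\<lambda>i. \<xi> i \<omega>) {1..L}) -` XE \<inter> space M)
        \<inter> ((\<lambda>\<omega>. restrict (\<lambda>i. \<xi> i \<omega>) {0}) -` XA \<inter> space M)"
    by auto
  moreover have "{\<omega>\<in>space M. (\<forall>j\<in>J. B j \<omega> - B a \<omega> \<in> E j) \<and> B a \<omega> \<in> A}
      = {\<omega>\<in>space M. \<forall>j\<in>J. B j \<omega> - B a \<omega> \<in> E j} \<inter> {\<omega>\<in>space M. B a \<omega> \<in> A}"
    by auto
  ultimately show ?thesis by (simp add: mult.commute)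
qed

lemma brownian_increments_after_indep:
  assumes bm: "std_brownian_motion M B" and a: "a \<in> dyadics" "0 < a"
    and D: "D \<subseteq> dyadics \<inter> {a..}"
  shows "indep_rvs M (Pi\<^sub>M D (\<lambda>_. borel)) (\<lambda>\<omega>. \<lambda>t\<in>D. B t \<omega> - B a \<omega>) borel (B a)"
proof (rule indep_rvs_PiM_if_cylinders[OF brownian_prob_space[OF bm]])
  have "B t \<in> borel_measurable M" if "t \<in> {a} \<union> D" for t
    using that D a brownian_measurable[OF bm, of t] by auto
  then show "(\<lambda>\<omega>. \<lambda>t\<in>D. B t \<omega> - B a \<omega>) \<in> measurable M (Pi\<^sub>M D (\<lambda>_. borel))"
    "B a \<in> borel_measurable M"
    by (auto intro!: measurable_restrict borel_measurable_diff)
  fix J and E :: "real \<Rightarrow> real set" and A :: "real set"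
  assume "finite J" "J \<subseteq> D" "\<And>j. j \<in> J \<Longrightarrow> E j \<in> sets borel" "A \<in> sets borel"
  with brownian_increments_after_indep_value[OF bm a, of J E A] D
  show "measure M {\<omega>\<in>space M. (\<forall>j\<in>J. (\<lambda>t\<in>D. B t \<omega> - B a \<omega>) j \<in> E j) \<and> B a \<omega> \<in> A}
    = measure M {\<omega>\<in>space M. \<forall>j\<in>J. (\<lambda>t\<in>D. B t \<omega> - B a \<omega>) j \<in> E j} * measure M {\<omega>\<in>space M. B a \<omega> \<in> A}"
    by (auto cong: conj_cong ball_cong simp: subset_iff)
qed

text \<open>After a dyadic time \<open>a > 0\<close>, the path is \<open>B a\<close> plus an independent process, and
  \<open>B a\<close> has no atoms; so for a fixed level \<open>c\<close> at most one value of \<open>B a\<close> makes \<open>c\<close> the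
  supremum.\<close>
lemma AE_brownian_not_sup_on_after:
  assumes bm: "std_brownian_motion M B" and a: "a \<in> dyadics" "0 < a"
  shows "AE \<omega> in M. \<not> is_sup_on (dyadics \<inter> {a..b}) (\<lambda>t. B t \<omega>) c"
proof -
  interpret prob_space M using brownian_prob_space[OF bm] .
  define D where "D = dyadics \<inter> {a..b}"
  define U where "U = (\<lambda>\<omega>. \<lambda>t\<in>D. B t \<omega> - B a \<omega>)"
  have I: "indep_rvs M (Pi\<^sub>M D (\<lambda>_. borel)) U borel (B a)"
    unfolding U_def by (rule brownian_increments_after_indep[OF bm a]) (auto simp: D_def)
  have Um: "U \<in> measurable M (Pi\<^sub>M D (\<lambda>_. borel))" and Bam: "B a \<in> borel_measurable M"
    using I unfolding indep_rvs_def by auto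
  have cD: "countable D" unfolding D_def using countable_dyadics by (rule countable_subset[rotated]) auto
  define E where "E = {p \<in> space (Pi\<^sub>M D (\<lambda>_. borel) \<Otimes>\<^sub>M borel). is_sup_on D (\<lambda>t. snd p + fst p t) c}"
  have Es: "E \<in> sets (Pi\<^sub>M D (\<lambda>_. borel) \<Otimes>\<^sub>M borel)"
    unfolding E_def
  proof (rule predE[OF pred_is_sup_on[OF cD]])
    fix t assume "t \<in> D"
    then have "(\<lambda>f. f t) \<in> borel_measurable (Pi\<^sub>M D (\<lambda>_. borel))"
      using measurable_component_singleton[of t D "\<lambda>_. borel"] by simp
    then show "(\<lambda>p. snd p + fst p t) \<in> borel_measurable (Pi\<^sub>M D (\<lambda>_. borel) \<Otimes>\<^sub>M (borel :: real measure))"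
      by measurable
  qed simp
  have "emeasure M {\<omega>\<in>space M. (U \<omega>, B a \<omega>) \<in> E} = 0"
  proof (rule indep_rvs_null_if_sections_null[OF prob_space_axioms I Es])
    fix f :: "real \<Rightarrow> real"
    have "Pair f -` E \<subseteq> {x}" if "x \<in> Pair f -` E" for x
      using that is_sup_on_add_const_unique[of D _ f c] unfolding E_def by auto
    then have "emeasure (distr M borel (B a)) (Pair f -` E) \<le> emeasure (distr M borel (B a)) {x}"
      if "x \<in> Pair f -` E" for x
      using that by (intro emeasure_mono) auto
    moreover have "emeasure (distr M borel (B a)) {x} = 0" for x
      using Bam brownian_point_null[OF bm a(2), of x]
      by (subst emeasure_distr) (auto simp: vimage_def Int_def conj_commute)
    ultimately show "emeasure (distr M borel (B a)) (Pair f -` E) = 0"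
      by (cases "Pair f -` E = {}") (auto simp: le_zero_eq)
  qed
  moreover have "{\<omega>\<in>space M. (U \<omega>, B a \<omega>) \<in> E} \<in> events" using Um Bam Es by measurable
  moreover have "{\<omega> \<in> space M. is_sup_on D (\<lambda>t. B t \<omega>) c} \<subseteq> {\<omega>\<in>space M. (U \<omega>, B a \<omega>) \<in> E}"
  proof safe
    fix \<omega> assume \<omega>: "\<omega> \<in> space M" "is_sup_on D (\<lambda>t. B t \<omega>) c"
    then have "is_sup_on D (\<lambda>t. B a \<omega> + U \<omega> t) c"
      by (subst is_sup_on_cong[where g="\<lambda>t. B t \<omega>"]) (auto simp: U_def)
    moreover have "U \<omega> \<in> space (Pi\<^sub>M D (\<lambda>_. borel))" using Um \<omega>(1) by (auto simp: measurable_def)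
    ultimately show "(U \<omega>, B a \<omega>) \<in> E" unfolding E_def by (auto simp: space_pair_measure)
  qed
  ultimately show ?thesis unfolding D_def[symmetric] by (intro AE_I[where N="{\<omega>\<in>space M. (U \<omega>, B a \<omega>) \<in> E}"]) auto
qed

lemma brownian_halving_increments_indep:
  assumes bm: "std_brownian_motion M B" and q: "0 < q"
  shows "prob_space.indep_vars M (\<lambda>_. borel) (\<lambda>k \<omega>. B (q / 2^k) \<omega> - B (q / 2^Suc k) \<omega>) UNIV"
proof -
  interpret prob_space M using brownian_prob_space[OF bm] .
  show ?thesis
  proof (rule indep_vars_UNIV_if_lessThan)
    fix n
    define ts where "ts i = q / 2^(n - i)" for i
    have "indep_vars (\<lambda>_. borel) (\<lambda>i \<omega>. B (ts (Suc i)) \<omega> - B (ts i) \<omega>) {..<n}"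
    proof (rule brownian_increments_indep[OF bm])
      show "0 \<le> ts 0" unfolding ts_def using q by simp
      fix i assume "i < n"
      then have "(2::real)^(n - Suc i) < 2^(n - i)" by (intro power_strict_increasing) auto
      then show "ts i < ts (Suc i)" unfolding ts_def using q by (intro divide_strict_left_mono) auto
    qed
    moreover have "bij_betw (\<lambda>j. n - 1 - j) {..<n} {..<n}"
      by (rule bij_betw_byWitness[where f'="\<lambda>j. n - 1 - j"]) auto
    ultimately have "indep_vars (\<lambda>_. borel)
        (\<lambda>j \<omega>. B (ts (Suc (n - 1 - j))) \<omega> - B (ts (n - 1 - j)) \<omega>) {..<n}"
      by (rule indep_vars_reindex)
    moreover have "(\<lambda>\<omega>. B (ts (Suc (n - 1 - j))) \<omega> - B (ts (n - 1 - j)) \<omega>)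
        = (\<lambda>\<omega>. B (q / 2^j) \<omega> - B (q / 2^Suc j) \<omega>)" if "j \<in> {..<n}" for j
      using that unfolding ts_def by (auto simp: Suc_diff_Suc)
    ultimately show "indep_vars (\<lambda>_. borel) (\<lambda>k \<omega>. B (q / 2^k) \<omega> - B (q / 2^Suc k) \<omega>) {..<n}"
      using indep_vars_cong[of "{..<n}" "{..<n}"] by (metis (no_types, lifting))
  qed
qed

text \<open>A Blumenthal-type argument: by the 0-1 law the tail event "eventually \<open>B (q/2^k) \<le> 0\<close>"
  has probability 0 or 1, and it has probability at most \<open>1/2\<close>.\<close>
lemma AE_brownian_positive_near_zero:
  assumes bm: "std_brownian_motion M B" and q: "0 < q"
  shows "AE \<omega> in M. \<exists>k. 0 < B (q / 2^k) \<omega>"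
proof -
  interpret prob_space M using brownian_prob_space[OF bm] .
  define \<xi> where "\<xi> k \<omega> = B (q / 2^k) \<omega> - B (q / 2^Suc k) \<omega>" for k \<omega>
  have Bm [measurable]: "(\<lambda>\<omega>. B (q / 2^k) \<omega>) \<in> borel_measurable M" for k
    using brownian_measurable[OF bm] q by auto
  define A where "A i = sigma_sets (space M) {\<xi> i -` S \<inter> space M | S. S \<in> sets borel}" for i
  have "indep_sets A UNIV"
    using brownian_halving_increments_indep[OF bm q] unfolding indep_vars_def A_def \<xi>_def by simp
  moreover have "sigma_algebra (space M) (A i)" for i
    unfolding A_def by (rule sigma_algebra_sigma_sets) auto
  moreover have "{\<omega>\<in>space M. \<exists>K. \<forall>k\<ge>K. B (q / 2^k) \<omega> \<le> 0} \<in> tail_events A"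
    unfolding A_def
  proof (rule tail_sums_eventually_nonpos_tail_event)
    fix k \<omega> assume \<omega>: "\<omega> \<in> space M"
    have "(\<Sum>j\<in>{k..<k + N}. \<xi> j \<omega>) = B (q / 2^k) \<omega> - B (q / 2^(k + N)) \<omega>" for N
      unfolding \<xi>_def by (induction N) auto
    moreover have "(\<lambda>N. q / 2^k / 2^N) \<longlonglongrightarrow> 0" by (rule LIMSEQ_divide_realpow_zero) simp
    then have "(\<lambda>N. B (q / 2^(k + N)) \<omega>) \<longlonglongrightarrow> B 0 \<omega>"
      using q by (intro continuous_on_tendsto_compose[OF brownian_continuous[OF bm \<omega>]])
        (auto simp: power_add intro!: always_eventually)
    ultimately show "(\<lambda>N. \<Sum>j\<in>{k..<k + N}. \<xi> j \<omega>) \<longlonglongrightarrow> B (q / 2^k) \<omega>"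
      using brownian_at_zero[OF bm \<omega>] by (auto intro!: tendsto_eq_intros)
  qed
  ultimately have zero_one: "prob X = 0 \<or> prob X = 1"
    if "X = {\<omega>\<in>space M. \<exists>K. \<forall>k\<ge>K. B (q / 2^k) \<omega> \<le> 0}" for X
    using that by (intro kolmogorov_0_1_law) auto
  define XK where "XK K = {\<omega>\<in>space M. \<forall>k\<ge>K. B (q / 2^k) \<omega> \<le> 0}" for K
  have "prob (XK K) \<le> 1/2" for K
  proof -
    have "prob (XK K) \<le> prob {\<omega>\<in>space M. B (q / 2^K) \<omega> \<le> 0}"
      by (rule finite_measure_mono) (auto simp: XK_def)
    also have "\<dots> \<le> 1/2" using q by (intro brownian_prob_nonpos[OF bm]) simp
    finally show ?thesis .
  qed
  moreover have "(\<lambda>K. prob (XK K)) \<longlonglongrightarrow> prob (\<Union>K. XK K)"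
    by (rule finite_Lim_measure_incseq) (auto simp: incseq_def XK_def)
  ultimately have "prob (\<Union>K. XK K) \<le> 1/2"
    by (intro LIMSEQ_le_const2) auto
  moreover have "(\<Union>K. XK K) = {\<omega>\<in>space M. \<exists>K. \<forall>k\<ge>K. B (q / 2^k) \<omega> \<le> 0}"
    unfolding XK_def by auto
  ultimately have "emeasure M {\<omega>\<in>space M. \<exists>K. \<forall>k\<ge>K. B (q / 2^k) \<omega> \<le> 0} = 0"
    using zero_one by (auto simp: emeasure_eq_measure)
  then show ?thesis
    by (rule AE_I[rotated]) (auto simp: not_less)
qed

lemma AE_brownian_not_sup_on:
  assumes bm: "std_brownian_motion M B" and q: "q \<in> dyadics" "0 < q"
  shows "AE \<omega> in M. \<not> is_sup_on (dyadics \<inter> {0..q}) (\<lambda>t. B t \<omega>) c"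
proof -
  interpret prob_space M using brownian_prob_space[OF bm] .
  have "AE \<omega> in M. \<forall>k. \<not> is_sup_on (dyadics \<inter> {q / 2^Suc k..q / 2^k}) (\<lambda>t. B t \<omega>) c"
  proof (rule AE_all_countable[THEN iffD2], rule allI)
    fix k :: nat
    show "AE \<omega> in M. \<not> is_sup_on (dyadics \<inter> {q / 2^Suc k..q / 2^k}) (\<lambda>t. B t \<omega>) c"
      using q by (intro AE_brownian_not_sup_on_after[OF bm dyadics_divide_power]) auto
  qed
  with AE_brownian_positive_near_zero[OF bm q(2)] AE_space show ?thesis
  proof eventually_elim
    case (elim \<omega>)
    then show ?case
      using is_sup_on_dyadics_split[OF brownian_continuous[OF bm] brownian_at_zero[OF bm] q]
      by (meson not_le)
  qed
qed

lemma AE_indep_brownian_not_sup_on: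
  fixes Z :: "'a \<Rightarrow> 'b" and g h :: "'b \<Rightarrow> real"
  assumes bm: "std_brownian_motion M B"
    and I: "indep_rvs M S Z (Pi\<^sub>M {0::real..} (\<lambda>_. borel)) (\<lambda>\<omega>. \<lambda>t\<in>{0..}. B t \<omega>)"
    and g: "g \<in> borel_measurable S" and h: "h \<in> borel_measurable S" and q: "q \<in> dyadics" "0 < q"
  shows "AE \<omega> in M. \<not> is_sup_on (dyadics \<inter> {0..q}) (\<lambda>t. g (Z \<omega>) + B t \<omega>) (h (Z \<omega>))"
proof -
  interpret prob_space M using brownian_prob_space[OF bm] .
  define P where "P = (\<lambda>\<omega>. \<lambda>t\<in>{0::real..}. B t \<omega>)"
  define T where "T = Pi\<^sub>M {0::real..} (\<lambda>_. borel :: real measure)"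
  have Zm: "Z \<in> measurable M S" and Pm: "P \<in> measurable M T"
    using I unfolding indep_rvs_def P_def T_def by auto
  define D where "D = dyadics \<inter> {0..q}"
  have cD: "countable D" unfolding D_def using countable_dyadics by (rule countable_subset[rotated]) auto
  define E where "E = {p \<in> space (S \<Otimes>\<^sub>M T). is_sup_on D (\<lambda>t. g (fst p) + snd p t) (h (fst p))}"
  have Es: "E \<in> sets (S \<Otimes>\<^sub>M T)"
    unfolding E_def
  proof (rule predE[OF pred_is_sup_on[OF cD]])
    fix t assume "t \<in> D"
    then have "(\<lambda>f. f t) \<in> borel_measurable T"
      unfolding T_def D_def using measurable_component_singleton[of t "{0..}" "\<lambda>_. borel"] by auto
    then show "(\<lambda>p. g (fst p) + snd p t) \<in> borel_measurable (S \<Otimes>\<^sub>M T)" using g by measurable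
  qed (use h in measurable)
  have "emeasure M {\<omega>\<in>space M. (Z \<omega>, P \<omega>) \<in> E} = 0"
  proof (rule indep_rvs_null_if_sections_null[OF prob_space_axioms I[folded P_def T_def] Es])
    fix z assume z: "z \<in> space S"
    have "P -` (Pair z -` E) \<inter> space M = {\<omega>\<in>space M. is_sup_on D (\<lambda>t. B t \<omega>) (h z - g z)}"
    proof -
      have "is_sup_on D (\<lambda>t. g z + P \<omega> t) (h z) \<longleftrightarrow> is_sup_on D (\<lambda>t. B t \<omega>) (h z - g z)" for \<omega>
        by (subst is_sup_on_cong[where g="\<lambda>t. g z + B t \<omega>"]) (auto simp: P_def D_def is_sup_on_add_const)
      then show ?thesis using Pm z unfolding E_def by (auto simp: measurable_def space_pair_measure)
    qed
    moreover have "{\<omega>\<in>space M. is_sup_on D (\<lambda>t. B t \<omega>) (h z - g z)} \<in> events"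
      using brownian_measurable[OF bm] by (intro predE pred_is_sup_on[OF cD]) (auto simp: D_def)
    then have "emeasure M {\<omega>\<in>space M. is_sup_on D (\<lambda>t. B t \<omega>) (h z - g z)} = 0"
      using AE_brownian_not_sup_on[OF bm q, of "h z - g z"] by (simp add: AE_iff_measurable D_def)
    ultimately show "emeasure (distr M T P) (Pair z -` E) = 0"
      by (simp add: emeasure_distr[OF Pm sets_Pair1[OF Es]])
  qed
  moreover have "{\<omega>\<in>space M. (Z \<omega>, P \<omega>) \<in> E} \<in> events" using Zm Pm Es by measurable
  moreover have "{\<omega>\<in>space M. is_sup_on D (\<lambda>t. g (Z \<omega>) + B t \<omega>) (h (Z \<omega>))} \<subseteq> {\<omega>\<in>space M. (Z \<omega>, P \<omega>) \<in> E}"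
  proof safe
    fix \<omega> assume \<omega>: "\<omega> \<in> space M" "is_sup_on D (\<lambda>t. g (Z \<omega>) + B t \<omega>) (h (Z \<omega>))"
    then have "is_sup_on D (\<lambda>t. g (Z \<omega>) + P \<omega> t) (h (Z \<omega>))"
      by (subst is_sup_on_cong[where g="\<lambda>t. g (Z \<omega>) + B t \<omega>"]) (auto simp: P_def D_def)
    moreover have "Z \<omega> \<in> space S" "P \<omega> \<in> space T" using Zm Pm \<omega>(1) by (auto simp: measurable_def)
    ultimately show "(Z \<omega>, P \<omega>) \<in> E" unfolding E_def by (auto simp: space_pair_measure)
  qed
  ultimately show ?thesis unfolding D_def by (intro AE_I[where N="{\<omega>\<in>space M. (Z \<omega>, P \<omega>) \<in> E}"]) auto
qed

lemma AE_indep_brownian_no_critical_sup: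
  fixes Z :: "'a \<Rightarrow> 'b" and f g :: "'b \<Rightarrow> real"
  assumes bm: "std_brownian_motion M B"
    and I: "indep_rvs M S Z (Pi\<^sub>M {0::real..} (\<lambda>_. borel)) (\<lambda>\<omega>. \<lambda>t\<in>{0..}. B t \<omega>)"
    and f: "f \<in> borel_measurable S" and g: "g \<in> borel_measurable S"
  shows "AE \<omega> in M. no_dyadic_sup_at (critical_levels \<psi> (f (Z \<omega>)) (g (Z \<omega>))) (\<lambda>t. g (Z \<omega>) + B t \<omega>)"
proof -
  interpret prob_space M using brownian_prob_space[OF bm] .
  define level where
    "level r z = (case r of None \<Rightarrow> g z | Some r \<Rightarrow> real_of_ereal (next_below \<psi> r (f z)))" for r z
  have "countable {q\<in>dyadics. 0 < q}" using countable_dyadics by (rule countable_subset[rotated]) auto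
  moreover have "level r \<in> borel_measurable S" for r
    unfolding level_def using borel_measurable_next_below f g by (cases r) (auto intro: measurable_compose)
  ultimately have "AE \<omega> in M. \<forall>r\<in>insert None (Some ` \<rat>). \<forall>q\<in>{q\<in>dyadics. 0 < q}.
      \<not> is_sup_on (dyadics \<inter> {0..q}) (\<lambda>t. g (Z \<omega>) + B t \<omega>) (level r (Z \<omega>))"
    using AE_indep_brownian_not_sup_on[OF bm I g]
    by (intro AE_ball_countable' countable_insert countable_image countable_rat) auto
  then show ?thesis
    by eventually_elim (auto simp: critical_levels_def no_dyadic_sup_at_def level_def)
qed

theorem lemma3p2:
  fixes M :: "'a measure" and \<pi> :: "(real \<times> real) measure"
    and \<psi> :: "real \<Rightarrow> real" and B :: "real \<Rightarrow> 'a \<Rightarrow> real" and X Y :: "'a \<Rightarrow> real"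
  assumes "prob_space M"
    and "std_brownian_motion M B"
    and "X \<in> borel_measurable M" and "Y \<in> borel_measurable M"
    and "distr M (borel \<Otimes>\<^sub>M borel) (\<lambda>\<omega>. (X \<omega>, Y \<omega>)) = \<pi>"
    and "\<forall>x. measure (distr \<pi> borel fst) {x} = 0"
    and "\<psi> \<in> borel_measurable borel"
    and "indep_rvs M (borel \<Otimes>\<^sub>M borel) (\<lambda>\<omega>. (X \<omega>, Y \<omega>))
           (Pi\<^sub>M {0::real..} (\<lambda>_. borel)) (\<lambda>\<omega>. \<lambda>t\<in>{0..}. B t \<omega>)"
  shows "AE \<omega> in M.
           hitting_time {(x, y). x \<ge> \<psi> y} B (X \<omega>) (Y \<omega>) \<omega>
         = hitting_time {(x, y). x > \<psi> y} B (X \<omega>) (Y \<omega>) \<omega>"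
proof -
  note bm = assms(2) and indep = assms(8)
  have "distr \<pi> borel fst = distr M borel X"
    unfolding assms(5)[symmetric] using assms(3,4) by (subst distr_distr) (auto simp: comp_def)
  then have X: "AE \<omega> in M. X \<omega> \<notin> interval_infima \<psi>"
    using assms(1,3,6) countable_interval_infima by (intro AE_notin_countable_if_no_atoms) auto
  have up: "AE \<omega> in M. no_dyadic_sup_at (critical_levels \<psi> (X \<omega>) (Y \<omega>)) (\<lambda>t. Y \<omega> + B t \<omega>)"
    using AE_indep_brownian_no_critical_sup[OF bm indep, of fst snd \<psi>] by simp
  have down: "AE \<omega> in M. no_dyadic_sup_at (critical_levels (\<lambda>w. \<psi> (- w)) (X \<omega>) (- Y \<omega>))
      (\<lambda>t. - Y \<omega> + - B t \<omega>)"
    using AE_indep_brownian_no_critical_sup[OF std_brownian_motion_uminus[OF bm]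
        indep_rvs_uminus_path[OF assms(1) indep], of fst "\<lambda>p. - snd p" "\<lambda>w. \<psi> (- w)"]
    by simp
  show ?thesis
    using X up down AE_space
  proof eventually_elim
    case (elim \<omega>)
    have "continuous_on {0..} (\<lambda>t. Y \<omega> + B t \<omega>)"
      using brownian_continuous[OF bm elim(4)] by (intro continuous_intros)
    from hitting_closed_eq_open_if_no_critical_sup[OF this elim(1)] elim(2,3)
    show ?case using brownian_at_zero[OF bm elim(4)] unfolding hitting_time_def by simp
  qed
qed

end
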